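(* Let $K\ge2$, let $\mathbf{W}$ be a $K\times K$ invertible row-stochastic matrix, let $\mathbf{p}$ be a probability vector with all entries positive, and let $i\ne j$ in $[K]$. Let $\boldsymbol{\Pi}_{\{i,j\}}$ be the permutation matrix that swaps the $i$-th and $j$-th entries. Then the function $$[0,1]\to\mathbb{R}_+,\qquad \lambda\mapsto\alpha_{f\text{-DIV}}\big(\lambda\mathbf{p}+(1-\lambda)\mathbf{p}\boldsymbol{\Pi}_{\{i,j\}},\mathbf{W}\big)$$ is convex.
   Context: $\boldsymbol{\Phi}(\mathbf{W})=\mathbf{W}(\mathbf{W}^{-1}\odot\mathbf{W}^{-1})$ with $\odot$ the entrywise product. For a probability vector $\mathbf{p}$ with positive entries, $\alpha_{f\text{-DIV}}(\mathbf{p},\mathbf{W})=\frac{\mathbf{p}\boldsymbol{\Phi}(\mathbf{W})\mathbf{p}^{-\top}-1}{K-1}=\frac{1}{K-1}\Big(\sum_{k,\ell}\frac{p_k}{p_\ell}\Phi_{k,\ell}(\mathbf{W})-1\Big)$, where $\mathbf{p}^{-\top}$ is the column vector of entrywise reciprocals of $\mathbf{p}$ (this is the paper's closed form for the limiting normalized $f$-divergence loss). *)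

theory Defs
  imports "HOL-Analysis.Analysis"
begin

definition row_stochastic :: "real^'n^'n \<Rightarrow> bool" where
  "row_stochastic W \<longleftrightarrow> (\<forall>k l. W $ k $ l \<ge> 0) \<and> (\<forall>k. (\<Sum>l\<in>UNIV. W $ k $ l) = 1)"

definition pos_prob_vector :: "real^'n \<Rightarrow> bool" where
  "pos_prob_vector p \<longleftrightarrow> (\<forall>k. p $ k > 0) \<and> (\<Sum>k\<in>UNIV. p $ k) = 1"

definition Phi :: "real^'n^'n \<Rightarrow> real^'n^'n" where
  "Phi W = W ** (\<chi> k l. (matrix_inv W) $ k $ l * (matrix_inv W) $ k $ l)"

text \<open>alpha_{f-DIV}(p,W) = (p Phi(W) p^{-T} - 1)/(K-1).\<close>
definition alpha_fdiv :: "real^'n \<Rightarrow> real^'n^'n \<Rightarrow> real" where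
  "alpha_fdiv p W =
     ((\<Sum>k\<in>UNIV. \<Sum>l\<in>UNIV. (p $ k / p $ l) * Phi W $ k $ l) - 1) / (real CARD('n) - 1)"

definition swap_perm_matrix :: "'n \<Rightarrow> 'n \<Rightarrow> real^'n^'n" where
  "swap_perm_matrix i j = (\<chi> r c. if (r = i \<and> c = j) \<or> (r = j \<and> c = i) \<or> (r = c \<and> r \<noteq> i \<and> r \<noteq> j)
                                  then 1 else 0)"

end

theory Submission
  imports Defs
begin

(* Along the segment, the k-th coordinate of lam p + (1 - lam) p Pi is affine in lam, namely
   p_(tau k) + (p_k - p_(tau k)) lam with tau the transposition of i and j, and positive on [0,1].
   Phi(W) is nonnegative because W is, so alpha is, up to a positive factor and a constant,
   a nonnegative combination of the ratios q_k / q_l of these affine functions.  A linear-fractional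
   function (a + b x) / (c + d x) with positive denominator equals b/d + ((a d - b c)/d) / (c + d x),
   hence is convex when d (a d - b c) >= 0; for the ratios at hand this quantity is 0,
   p_k (p_l - p_(tau l))^2 or (p_k + p_l) (p_l - p_k)^2. *)

lemma convex_on_cong:
  assumes "\<And>x. x \<in> S \<Longrightarrow> f x = g x"
  shows "convex_on S f \<longleftrightarrow> convex_on S g"
proof -
  have "convex_on S g" if "convex_on S f" "\<And>x. x \<in> S \<Longrightarrow> f x = g x" for f g
    using that unfolding convex_on_def convex_def by (metis (no_types, lifting))
  then show ?thesis using assms by (metis (no_types, lifting))
qed

lemma convex_on_sum_fun:
  fixes f :: "'i \<Rightarrow> 'a::real_vector \<Rightarrow> real"
  assumes "finite I" "convex S" "\<And>i. i \<in> I \<Longrightarrow> convex_on S (f i)"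
  shows "convex_on S (\<lambda>x. \<Sum>i\<in>I. f i x)"
  using assms by (induction I rule: finite_induct) (auto simp: convex_on_const)

lemma convex_on_affine_real:
  fixes a b :: real
  assumes "convex S"
  shows "convex_on S (\<lambda>x. a + b * x)"
  using assms by (intro convex_onI) (auto simp: algebra_simps)

lemma convex_on_compose_affine_real:
  fixes g :: "real \<Rightarrow> real"
  assumes "convex_on T g" "convex S" "\<And>x. x \<in> S \<Longrightarrow> c + d * x \<in> T"
  shows "convex_on S (\<lambda>x. g (c + d * x))"
proof (rule convex_onI[OF _ \<open>convex S\<close>])
  fix t x y :: real
  assume "0 < t" "t < 1" "x \<in> S" "y \<in> S"
  moreover have "c + d * ((1 - t) *\<^sub>R x + t *\<^sub>R y) = (1 - t) *\<^sub>R (c + d * x) + t *\<^sub>R (c + d * y)"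
    by (simp add: algebra_simps)
  ultimately show "g (c + d * ((1 - t) *\<^sub>R x + t *\<^sub>R y)) \<le> (1 - t) * g (c + d * x) + t * g (c + d * y)"
    using convex_onD[OF assms(1)] assms(3) by simp
qed

lemma convex_on_linear_fractional:
  fixes a b c d :: real
  assumes "convex S" and pos: "\<And>x. x \<in> S \<Longrightarrow> 0 < c + d * x"
    and "0 \<le> d * (a * d - b * c)"
  shows "convex_on S (\<lambda>x. (a + b * x) / (c + d * x))"
proof (cases "d = 0")
  case True
  then have "(a + b * x) / (c + d * x) = a / c + b / c * x" for x
    by (simp add: add_divide_distrib)
  then show ?thesis using convex_on_affine_real[OF \<open>convex S\<close>, of "a / c" "b / c"] by simp
next
  case False
  have "convex_on {0<..} (inverse :: real \<Rightarrow> real)"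
    by (rule convex_on_inverse) auto
  then have "convex_on S (\<lambda>x. inverse (c + d * x))"
    using convex_on_compose_affine_real[OF _ \<open>convex S\<close>] pos by simp
  moreover have "0 \<le> (a * d - b * c) / d"
    using assms(3) False by (smt (verit) divide_nonneg_nonneg divide_nonpos_nonpos mult_pos_neg zero_le_mult_iff)
  ultimately have "convex_on S (\<lambda>x. b / d + (a * d - b * c) / d * inverse (c + d * x))"
    using \<open>convex S\<close> by (intro convex_on_add convex_on_cmul) (simp_all add: convex_on_const)
  moreover have "(a + b * x) / (c + d * x) = b / d + (a * d - b * c) / d * inverse (c + d * x)"
    if "x \<in> S" for x
  proof -
    have "c + d * x \<noteq> 0" using pos[OF that] by simp
    have "a + b * x = b / d * (c + d * x) + (a * d - b * c) / d"
      using False by (simp add: field_simps)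
    then have "(a + b * x) / (c + d * x) = (b / d * (c + d * x) + (a * d - b * c) / d) / (c + d * x)"
      by simp
    also have "\<dots> = b / d + (a * d - b * c) / d / (c + d * x)"
      using \<open>c + d * x \<noteq> 0\<close> by (simp add: add_divide_distrib)
    also have "\<dots> = b / d + (a * d - b * c) / d * inverse (c + d * x)"
      by (simp add: divide_inverse)
    finally show ?thesis .
  qed
  ultimately show ?thesis by (metis (no_types, lifting) convex_on_cong)
qed

lemma vector_matrix_mult_swap_perm_matrix:
  fixes p :: "real^'n::finite"
  shows "(p v* swap_perm_matrix i j) $ k = p $ Transposition.transpose i j k"
proof -
  have "p $ r * swap_perm_matrix i j $ r $ k = (if r = Transposition.transpose i j k then p $ r else 0)" for r
    by (auto simp: swap_perm_matrix_def Transposition.transpose_def)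
  then show ?thesis by (simp add: vector_matrix_mult_def)
qed

lemma transpose_cross_term_nonneg:
  fixes p :: "'a \<Rightarrow> real"
  assumes "\<And>k. 0 \<le> p k"
  shows "0 \<le> (p l - p (Transposition.transpose i j l))
              * (p (Transposition.transpose i j k) * p l - p k * p (Transposition.transpose i j l))"
proof -
  consider "l \<noteq> i" "l \<noteq> j" | "k \<noteq> i" "k \<noteq> j" | "k = l" | "{k, l} = {i, j}"
    by blast
  then show ?thesis
  proof cases
    case 2
    then have "(p l - p (Transposition.transpose i j l))
              * (p (Transposition.transpose i j k) * p l - p k * p (Transposition.transpose i j l))
             = p k * (p l - p (Transposition.transpose i j l))\<^sup>2"
      by (simp add: power2_eq_square algebra_simps)
    then show ?thesis using assms by simp
  next
    case 4
    then have "(p l - p (Transposition.transpose i j l))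
              * (p (Transposition.transpose i j k) * p l - p k * p (Transposition.transpose i j l))
             = (p k + p l) * (p l - p k)\<^sup>2"
      by (auto simp: doubleton_eq_iff power2_eq_square algebra_simps)
    then show ?thesis using assms by simp
  qed simp_all
qed

lemma convex_on_transpose_interpolation_ratio:
  fixes p :: "'a \<Rightarrow> real"
  assumes pos: "\<And>k. 0 < p k"
  shows "convex_on {0..1} (\<lambda>x.
           (x * p k + (1 - x) * p (Transposition.transpose i j k))
         / (x * p l + (1 - x) * p (Transposition.transpose i j l)))"
proof -
  let ?\<tau> = "Transposition.transpose i j"
  have affine: "x * p m + (1 - x) * p (?\<tau> m) = p (?\<tau> m) + (p m - p (?\<tau> m)) * x" for x m
    by (simp add: algebra_simps)
  have denominator_pos: "0 < p (?\<tau> l) + (p l - p (?\<tau> l)) * x" if "x \<in> {0..1}" for x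
  proof (cases "x = 0")
    case False
    with that have "0 < x * p l" "0 \<le> (1 - x) * p (?\<tau> l)"
      using pos[of l] pos[of "?\<tau> l"] by auto
    then show ?thesis unfolding affine[symmetric] by linarith
  qed (simp add: pos)
  have "0 \<le> (p l - p (?\<tau> l)) * (p (?\<tau> k) * (p l - p (?\<tau> l)) - (p k - p (?\<tau> k)) * p (?\<tau> l))"
    using transpose_cross_term_nonneg[of p l i j k] pos by (simp add: less_imp_le algebra_simps)
  then show ?thesis
    unfolding affine by (intro convex_on_linear_fractional denominator_pos) auto
qed

lemma Phi_nonneg:
  assumes "row_stochastic W"
  shows "0 \<le> Phi W $ k $ l"
  using assms unfolding Phi_def row_stochastic_def matrix_matrix_mult_def
  by (auto intro!: sum_nonneg)

theorem lemma11:
  fixes W :: "real^'n::finite^'n" and p :: "real^'n" and i j :: 'n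
  assumes "CARD('n) \<ge> 2"
    and "invertible W"
    and "row_stochastic W"
    and "pos_prob_vector p"
    and "i \<noteq> j"
  shows "convex_on {0..1}
           (\<lambda>lam::real. alpha_fdiv (lam *\<^sub>R p + (1 - lam) *\<^sub>R (p v* swap_perm_matrix i j)) W)"
proof -
  let ?q = "\<lambda>lam::real. lam *\<^sub>R p + (1 - lam) *\<^sub>R (p v* swap_perm_matrix i j)"
  have pos: "0 < p $ k" for k
    using assms(4) by (simp add: pos_prob_vector_def)
  have "convex_on {0..1} (\<lambda>lam. ?q lam $ k / ?q lam $ l * Phi W $ k $ l)" for k l
    using convex_on_cmul[OF Phi_nonneg[OF assms(3)]
        convex_on_transpose_interpolation_ratio[of "($) p", OF pos]]
    by (simp add: vector_matrix_mult_swap_perm_matrix mult.commute)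
  then have "convex_on {0..1} (\<lambda>lam. \<Sum>k\<in>UNIV. \<Sum>l\<in>UNIV. ?q lam $ k / ?q lam $ l * Phi W $ k $ l)"
    by (intro convex_on_sum_fun) auto
  moreover have "0 \<le> real CARD('n) - 1"
    using assms(1) by simp
  ultimately show ?thesis
    unfolding alpha_fdiv_def
    by (intro convex_on_cdiv convex_on_diff) (simp_all add: concave_on_const)
qed

end
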